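(* Assume the conditional linking at random (CLAR) assumption $P(L=1\mid \tilde{T}, \Delta, Q=0, \mathbf{X}) = P(L=1\mid Q=0, \mathbf{X})$ holds. Then for any $(\boldsymbol\beta,\lambda_0)$, $$\mathbb{E}\big(l(\boldsymbol\beta,\lambda_0)\big) = \mathbb{E}\left[\frac{I(L+Q>0)\, l(\boldsymbol\beta,\lambda_0)}{Q + (1-Q)\,P(L=1\mid \mathbf{X}, Q=0)}\right],$$ where $l(\boldsymbol\beta,\lambda_0) = \log\big(\lambda(\tilde{T}\mid \mathbf{X})^{\Delta} S(\tilde{T}\mid \mathbf{X})\big)$ is the Cox log-likelihood contribution of a single observation, with $\lambda(t\mid\mathbf{X}) = \lambda_0(t)\exp(\boldsymbol\beta^T\mathbf{X})$ and $S(t\mid\mathbf{X})$ the corresponding conditional survival function.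
   Context: Participants of a clinical trial are possibly linked to an observational follow-up dataset. $T$ is the failure time, $C_1$ the censoring time within the trial, $C_2$ the censoring time in the observational follow-up, $C=\max(C_1,C_2)$, $\tilde{T}=\min(T,C)$, $\Delta=I(T\le C)$, $Q=I(T\le C_1)$ is the in-trial event indicator, $L\in\{0,1\}$ the linkage indicator, and $\mathbf{X}\in\mathbb{R}^p$ the (time-independent) covariates including treatment. The pair $(\tilde{T},\Delta)$ is observed when $L=1$ or $Q=1$, and missing when $L=0,Q=0$. Expectations are over $(L,Q,\tilde{T},\Delta,\mathbf{X})$, and $P(L=1\mid \mathbf{X},Q=0)>0$ so the weight is well defined. *)

theory Defs
  imports "HOL-Probability.Probability"
begin

definition cox_hazard :: "(real \<Rightarrow> real) \<Rightarrow> real ^ 'p \<Rightarrow> real \<Rightarrow> real ^ 'p \<Rightarrow> real" where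
  "cox_hazard lam0 beta t x = lam0 t * exp (beta \<bullet> x)"

definition cox_surv :: "(real \<Rightarrow> real) \<Rightarrow> real ^ 'p \<Rightarrow> real \<Rightarrow> real ^ 'p \<Rightarrow> real" where
  "cox_surv lam0 beta t x = exp (- ((LBINT s=0..t. lam0 s) * exp (beta \<bullet> x)))"

definition cox_loglik :: "real ^ 'p \<Rightarrow> (real \<Rightarrow> real) \<Rightarrow> real \<Rightarrow> real \<Rightarrow> real ^ 'p \<Rightarrow> real" where
  "cox_loglik beta lam0 t d x =
     ln ((if d = 1 then cox_hazard lam0 beta t x else 1) * cox_surv lam0 beta t x)"

end

(* Split the expectation of l along the in-trial event indicator Q. Where Q = 1 the
   likelihood is always observed. Where Q = 0, l is a function of the observed data
   (T~, Delta, Q, X), so E[(1 - Q) l] = E[(1 - Q) l E[L | T~, Delta, Q, X] / pi] with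
   pi = P(L = 1 | Q, X); by CLAR the inner conditional expectation is pi itself on {Q = 0},
   and moving it back out of the expectation gives E[(1 - Q) l L / pi]. *)

theory Submission
  imports Defs
begin

lemma borel_measurable_interval_integral_upper_limit [measurable]:
  fixes f :: "real \<Rightarrow> real"
  assumes [measurable]: "f \<in> borel_measurable borel"
  shows "(\<lambda>t. LBINT s=a..t. f s) \<in> borel_measurable borel"
  unfolding interval_lebesgue_integral_def set_lebesgue_integral_def einterval_def
  by (simp add: indicator_def) measurable

lemma measurable_cox_loglik:
  assumes [measurable]: "lam0 \<in> borel_measurable borel"
    "t \<in> borel_measurable N" "d \<in> borel_measurable N" "x \<in> borel_measurable N"
  shows "(\<lambda>\<omega>. cox_loglik beta lam0 (t \<omega>) (d \<omega>) (x \<omega>)) \<in> borel_measurable N"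
  unfolding cox_loglik_def cox_hazard_def cox_surv_def by measurable

lemma subalgebra_vimage_algebra:
  assumes "g \<in> measurable N K"
  shows "subalgebra N (vimage_algebra (space N) g K)"
  using sets_image_in_sets[OF refl assms] by (simp add: subalgebra_def)

context sigma_finite_subalgebra
begin

lemma nn_cond_exp_eq_real_cond_exp:
  assumes f_int: "integrable M f" and f_nonneg: "\<And>x. 0 \<le> f x"
  shows "AE x in M. nn_cond_exp M F (\<lambda>x. ennreal (f x)) x = ennreal (real_cond_exp M F f x)"
proof -
  have "(\<integral>\<^sup>+x. nn_cond_exp M F (\<lambda>x. ennreal (f x)) x \<partial>M) = (\<integral>\<^sup>+x. ennreal (f x) \<partial>M)"
    using nn_cond_exp_intg[of "\<lambda>_. 1" "\<lambda>x. ennreal (f x)"] f_int by simp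
  also have "\<dots> < \<infinity>"
    using f_int f_nonneg by (simp add: integrable_iff_bounded)
  finally have finite: "AE x in M. nn_cond_exp M F (\<lambda>x. ennreal (f x)) x \<noteq> \<infinity>"
    by (intro nn_integral_PInf_AE) auto
  have "(\<lambda>x. ennreal (- f x)) = (\<lambda>_. 0)"
    using f_nonneg by (simp add: ennreal_neg)
  then have negative_part: "AE x in M. nn_cond_exp M F (\<lambda>x. ennreal (- f x)) x = 0"
    using nn_cond_exp_F_meas[of "\<lambda>_. 0"] by simp
  from finite negative_part show ?thesis
    by eventually_elim (simp add: real_cond_exp_def less_top)
qed

text \<open>Integrability of the weighted function is not assumed: the integral of its absolute
  value is computed exactly like its integral, with the nonnegative conditional expectation.\<close>

lemma integral_inverse_probability_weighting:
  fixes f R p :: "'a \<Rightarrow> real"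
  assumes f_int: "integrable M f" and [measurable]: "f \<in> borel_measurable F" "p \<in> borel_measurable F"
    and R_int: "integrable M R" and R_nonneg: "\<And>x. 0 \<le> R x"
    and weight: "AE x in M. f x \<noteq> 0 \<longrightarrow> p x \<noteq> 0 \<and> real_cond_exp M F R x = p x"
  shows "integrable M (\<lambda>x. f x * R x / p x)"
    and "(\<integral>x. f x * R x / p x \<partial>M) = (\<integral>x. f x \<partial>M)"
proof -
  define w where "w x = f x / p x" for x
  have [measurable]: "w \<in> borel_measurable F" "R \<in> borel_measurable M"
    using R_int unfolding w_def by measurable
  then have [measurable]: "w \<in> borel_measurable M" "f \<in> borel_measurable M"
    by (auto intro: measurable_from_subalg[OF subalg])
  have weighted_eq: "f x * R x / p x = w x * R x" for x
    by (simp add: w_def)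
  have cond_exp_nonneg: "AE x in M. 0 \<le> real_cond_exp M F R x"
    using R_nonneg by (intro real_cond_exp_pos) auto
  have w_cond_exp: "AE x in M. w x * real_cond_exp M F R x = f x"
    using weight by eventually_elim (auto simp: w_def)
  have w_nn_cond_exp: "AE x in M. ennreal \<bar>w x\<bar> * nn_cond_exp M F (\<lambda>x. ennreal (R x)) x = ennreal \<bar>f x\<bar>"
    using weight cond_exp_nonneg nn_cond_exp_eq_real_cond_exp[OF R_int R_nonneg]
  proof eventually_elim
    case (elim x)
    then show ?case
      by (cases "f x = 0") (auto simp: w_def ennreal_mult[symmetric] abs_divide)
  qed
  have "(\<integral>\<^sup>+x. ennreal (norm (w x * R x)) \<partial>M) = (\<integral>\<^sup>+x. ennreal \<bar>w x\<bar> * ennreal (R x) \<partial>M)"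
    using R_nonneg by (intro nn_integral_cong) (simp add: abs_mult ennreal_mult)
  also have "\<dots> = (\<integral>\<^sup>+x. ennreal \<bar>w x\<bar> * nn_cond_exp M F (\<lambda>x. ennreal (R x)) x \<partial>M)"
    by (rule nn_cond_exp_intg[symmetric]) auto
  also have "\<dots> = (\<integral>\<^sup>+x. ennreal (norm (f x)) \<partial>M)"
    using w_nn_cond_exp by (intro nn_integral_cong_AE) auto
  also have "\<dots> < \<infinity>"
    using f_int by (simp add: integrable_iff_bounded)
  finally have wR_int: "integrable M (\<lambda>x. w x * R x)"
    by (intro integrableI_bounded) auto
  then show "integrable M (\<lambda>x. f x * R x / p x)"
    unfolding weighted_eq .
  have "(\<integral>x. w x * R x \<partial>M) = (\<integral>x. w x * real_cond_exp M F R x \<partial>M)"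
    by (rule real_cond_exp_intg(2)[symmetric]) (use wR_int in auto)
  also have "\<dots> = (\<integral>x. f x \<partial>M)"
    using w_cond_exp by (intro integral_cong_AE) auto
  finally show "(\<integral>x. f x * R x / p x \<partial>M) = (\<integral>x. f x \<partial>M)"
    unfolding weighted_eq .
qed

lemma integral_partial_inverse_probability_weighting:
  fixes l Q R p :: "'a \<Rightarrow> real"
  assumes l_int: "integrable M l" and [measurable]: "l \<in> borel_measurable F" "Q \<in> borel_measurable F"
    and Q_01: "\<And>x. Q x \<in> {0, 1}"
    and R_int: "integrable M R" and R_nonneg: "\<And>x. 0 \<le> R x" and [measurable]: "p \<in> borel_measurable F"
    and weight: "AE x in M. Q x = 0 \<longrightarrow> p x \<noteq> 0 \<and> real_cond_exp M F R x = p x"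
  shows "(\<integral>x. l x \<partial>M) = (\<integral>x. (Q x + (1 - Q x) * R x / p x) * l x \<partial>M)"
proof -
  have Q_bounded: "norm (q * l x) \<le> norm (l x)" if "q \<in> {Q x, 1 - Q x}" for q x
    using that Q_01[of x] by auto
  have [measurable]: "Q \<in> borel_measurable M" "l \<in> borel_measurable M"
    by (auto intro: measurable_from_subalg[OF subalg])
  have Ql_int: "integrable M (\<lambda>x. Q x * l x)"
    using Q_bounded by (intro Bochner_Integration.integrable_bound[OF l_int]) auto
  have Q'l_int: "integrable M (\<lambda>x. (1 - Q x) * l x)"
    using Q_bounded by (intro Bochner_Integration.integrable_bound[OF l_int]) auto
  have "AE x in M. (1 - Q x) * l x \<noteq> 0 \<longrightarrow> p x \<noteq> 0 \<and> real_cond_exp M F R x = p x"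
    using weight
  proof eventually_elim
    case (elim x)
    then show ?case using Q_01[of x] by auto
  qed
  note weighting = integral_inverse_probability_weighting[OF Q'l_int _ _ R_int R_nonneg this]
  have "(\<integral>x. l x \<partial>M) = (\<integral>x. Q x * l x \<partial>M) + (\<integral>x. (1 - Q x) * l x \<partial>M)"
    unfolding Bochner_Integration.integral_add[OF Ql_int Q'l_int, symmetric] by (simp add: algebra_simps)
  also have "\<dots> = (\<integral>x. Q x * l x \<partial>M) + (\<integral>x. (1 - Q x) * l x * R x / p x \<partial>M)"
    using weighting by simp
  also have "\<dots> = (\<integral>x. (Q x + (1 - Q x) * R x / p x) * l x \<partial>M)"
    using Ql_int weighting by (simp add: algebra_simps)
  finally show ?thesis .
qed

end

theorem proposition3p1:
  fixes M :: "'a measure"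
    and T C1 C2 L :: "'a \<Rightarrow> real"
    and X :: "'a \<Rightarrow> real ^ 'p"
    and beta :: "real ^ 'p"
    and lam0 :: "real \<Rightarrow> real"
    and Ttil Delta Q :: "'a \<Rightarrow> real"
    and F_obs F_X :: "'a measure"
  assumes prob: "prob_space M"
    and T_meas: "T \<in> borel_measurable M"
    and C1_meas: "C1 \<in> borel_measurable M"
    and C2_meas: "C2 \<in> borel_measurable M"
    and L_meas: "L \<in> borel_measurable M"
    and X_meas: "X \<in> borel_measurable M"
    and L_01: "\<forall>\<omega>\<in>space M. L \<omega> \<in> {0, 1}"
    and Ttil_def: "\<And>\<omega>. Ttil \<omega> = min (T \<omega>) (max (C1 \<omega>) (C2 \<omega>))"
    and Delta_def: "\<And>\<omega>. Delta \<omega> = (if T \<omega> \<le> max (C1 \<omega>) (C2 \<omega>) then 1 else 0)"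
    and Q_def: "\<And>\<omega>. Q \<omega> = (if T \<omega> \<le> C1 \<omega> then 1 else 0)"
    and F_obs_def: "F_obs = vimage_algebra (space M) (\<lambda>\<omega>. (Ttil \<omega>, Delta \<omega>, Q \<omega>, X \<omega>)) borel"
    and F_X_def: "F_X = vimage_algebra (space M) (\<lambda>\<omega>. (Q \<omega>, X \<omega>)) borel"
    and lam0_meas: "lam0 \<in> borel_measurable borel"
    and lam0_nonneg: "\<And>t. lam0 t \<ge> 0"
    and lam0_locint: "\<And>a b. set_integrable lborel {a..b} lam0"
    and l_int: "integrable M (\<lambda>\<omega>. cox_loglik beta lam0 (Ttil \<omega>) (Delta \<omega>) (X \<omega>))"
    and positivity: "AE \<omega> in M. Q \<omega> = 0 \<longrightarrow>
        real_cond_exp M F_X (indicator {\<omega>\<in>space M. L \<omega> = 1}) \<omega> > 0"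
    and CLAR: "AE \<omega> in M. Q \<omega> = 0 \<longrightarrow>
        real_cond_exp M F_obs (indicator {\<omega>\<in>space M. L \<omega> = 1}) \<omega>
          = real_cond_exp M F_X (indicator {\<omega>\<in>space M. L \<omega> = 1}) \<omega>"
  shows "(\<integral>\<omega>. cox_loglik beta lam0 (Ttil \<omega>) (Delta \<omega>) (X \<omega>) \<partial>M)
       = (\<integral>\<omega>. indicator {\<omega>. L \<omega> + Q \<omega> > 0} \<omega>
                 * cox_loglik beta lam0 (Ttil \<omega>) (Delta \<omega>) (X \<omega>)
               / (Q \<omega> + (1 - Q \<omega>) * real_cond_exp M F_X (indicator {\<omega>\<in>space M. L \<omega> = 1}) \<omega>) \<partial>M)"
proof -
  interpret prob_space M by (rule prob)
  note [measurable] = T_meas C1_meas C2_meas L_meas X_meas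
  have [measurable]: "Ttil \<in> borel_measurable M" "Delta \<in> borel_measurable M" "Q \<in> borel_measurable M"
    unfolding Ttil_def[abs_def] Delta_def[abs_def] Q_def[abs_def] by measurable
  have "(\<lambda>\<omega>. (Ttil \<omega>, Delta \<omega>, Q \<omega>, X \<omega>)) \<in> F_obs \<rightarrow>\<^sub>M borel \<Otimes>\<^sub>M borel \<Otimes>\<^sub>M borel \<Otimes>\<^sub>M borel"
    unfolding F_obs_def by (simp add: borel_prod measurable_vimage_algebra1)
  then have [measurable]: "Ttil \<in> borel_measurable F_obs" "Delta \<in> borel_measurable F_obs"
      "Q \<in> borel_measurable F_obs" "X \<in> borel_measurable F_obs"
    by (simp_all add: measurable_pair_iff o_def)
  have sub_obs: "subalgebra M F_obs"
    unfolding F_obs_def by (rule subalgebra_vimage_algebra) measurable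
  have "(\<lambda>\<omega>. (Q \<omega>, X \<omega>)) \<in> borel_measurable F_obs"
    by measurable
  from subalgebra_vimage_algebra[OF this] have "subalgebra F_obs F_X"
    by (simp add: F_X_def F_obs_def)
  then have [measurable]: "real_cond_exp M F_X (indicator {\<omega>\<in>space M. L \<omega> = 1}) \<in> borel_measurable F_obs"
    by (rule measurable_from_subalg) measurable
  interpret finite_measure_subalgebra M F_obs
    using sub_obs by unfold_locales
  let ?R = "indicator {\<omega>\<in>space M. L \<omega> = 1} :: 'a \<Rightarrow> real"
  let ?\<pi> = "real_cond_exp M F_X ?R"
  let ?l = "\<lambda>\<omega>. cox_loglik beta lam0 (Ttil \<omega>) (Delta \<omega>) (X \<omega>)"
  have Q_01: "Q \<omega> \<in> {0, 1}" for \<omega>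
    by (simp add: Q_def)
  have "?l \<in> borel_measurable F_obs"
    by (intro measurable_cox_loglik lam0_meas) measurable
  moreover have "integrable M ?R"
    by (intro integrable_real_indicator) (auto simp: less_top[symmetric])
  moreover have "AE \<omega> in M. Q \<omega> = 0 \<longrightarrow> ?\<pi> \<omega> \<noteq> 0 \<and> real_cond_exp M F_obs ?R \<omega> = ?\<pi> \<omega>"
    using positivity CLAR by eventually_elim auto
  ultimately have "(\<integral>\<omega>. ?l \<omega> \<partial>M) = (\<integral>\<omega>. (Q \<omega> + (1 - Q \<omega>) * ?R \<omega> / ?\<pi> \<omega>) * ?l \<omega> \<partial>M)"
    using l_int Q_01 by (intro integral_partial_inverse_probability_weighting) auto
  also have "\<dots> = (\<integral>\<omega>. indicator {\<omega>. L \<omega> + Q \<omega> > 0} \<omega> * ?l \<omega> / (Q \<omega> + (1 - Q \<omega>) * ?\<pi> \<omega>) \<partial>M)"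
    using L_01 Q_def by (intro Bochner_Integration.integral_cong) (auto simp: indicator_def)
  finally show ?thesis .
qed

end
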